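(* A skew lattice $S$ is a weak distributive solution of the Yang–Baxter equation if and only if it satisfies, for all $x,y,z\in S$, \[ (x\wedge y\wedge x)\vee((x\vee y\vee x)\wedge z\wedge(x\vee y\vee x))\vee(x\wedge y\wedge x) =(x\vee(y\wedge z\wedge y)\vee x)\wedge(y\vee z\vee y)\wedge(x\vee(y\wedge z\wedge y)\vee x). \] In particular, weak distributive solutions form a variety of skew lattices.
   Context: A skew lattice is a set $S$ with two binary operations $\wedge,\vee$, each idempotent and associative, satisfying the absorption laws $x\wedge(x\vee y)=x=x\vee(x\wedge y)$ and $(x\wedge y)\vee y=y=(x\vee y)\wedge y$ for all $x,y\in S$. $S$ is a weak distributive solution if $r_W:S\times S\to S\times S$, $r_W(x,y)=(x\wedge y\wedge x,\,x\vee y\vee x)$, satisfies $(r_W\times\mathrm{id})\circ(\mathrm{id}\times r_W)\circ(r_W\times\mathrm{id})=(\mathrm{id}\times r_W)\circ(r_W\times\mathrm{id})\circ(\mathrm{id}\times r_W)$. *)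

theory Defs
  imports Main
begin

definition skew_lattice :: "('a \<Rightarrow> 'a \<Rightarrow> 'a) \<Rightarrow> ('a \<Rightarrow> 'a \<Rightarrow> 'a) \<Rightarrow> bool" where
  "skew_lattice m j \<longleftrightarrow>
     (\<forall>x. m x x = x) \<and> (\<forall>x. j x x = x) \<and>
     (\<forall>x y z. m (m x y) z = m x (m y z)) \<and>
     (\<forall>x y z. j (j x y) z = j x (j y z)) \<and>
     (\<forall>x y. m x (j x y) = x \<and> j x (m x y) = x) \<and>
     (\<forall>x y. j (m x y) y = y \<and> m (j x y) y = y)"

definition rW :: "('a \<Rightarrow> 'a \<Rightarrow> 'a) \<Rightarrow> ('a \<Rightarrow> 'a \<Rightarrow> 'a) \<Rightarrow> 'a \<times> 'a \<Rightarrow> 'a \<times> 'a" where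
  "rW m j p = (case p of (x, y) \<Rightarrow> (m (m x y) x, j (j x y) x))"

definition r12 :: "('a \<times> 'a \<Rightarrow> 'a \<times> 'a) \<Rightarrow> 'a \<times> 'a \<times> 'a \<Rightarrow> 'a \<times> 'a \<times> 'a" where
  "r12 r t = (case t of (x, y, z) \<Rightarrow> (fst (r (x, y)), snd (r (x, y)), z))"

definition r23 :: "('a \<times> 'a \<Rightarrow> 'a \<times> 'a) \<Rightarrow> 'a \<times> 'a \<times> 'a \<Rightarrow> 'a \<times> 'a \<times> 'a" where
  "r23 r t = (case t of (x, y, z) \<Rightarrow> (x, r (y, z)))"

definition weak_distributive_solution :: "('a \<Rightarrow> 'a \<Rightarrow> 'a) \<Rightarrow> ('a \<Rightarrow> 'a \<Rightarrow> 'a) \<Rightarrow> bool" where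
  "weak_distributive_solution m j \<longleftrightarrow>
     r12 (rW m j) \<circ> r23 (rW m j) \<circ> r12 (rW m j) = r23 (rW m j) \<circ> r12 (rW m j) \<circ> r23 (rW m j)"

end

theory Submission
  imports Defs
begin

text \<open>
  The braid relation for \<open>r\<^sub>W\<close> is an equality of triples, so it amounts to three identities.
  The first and the third hold in every skew lattice: both sides reduce to the same word
  because the meet and join reducts are regular bands (\<open>xyxzx = xyzx\<close>). Regularity in turn
  comes from the rectangularity of \<open>\<D>\<close>-classes in a band, applied to the elements
  \<open>xy \<or> x\<close> and \<open>x \<or> zx\<close>, which are \<open>\<R>\<close>- resp. \<open>\<L>\<close>-related to \<open>x\<close> in the meet band.
  What remains is the middle identity, which is the one in the theorem.
\<close>

abbreviation sandwich :: "('a \<Rightarrow> 'a \<Rightarrow> 'a) \<Rightarrow> 'a \<Rightarrow> 'a \<Rightarrow> 'a" where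
  "sandwich f x y \<equiv> f (f x y) x"

lemma weak_distributive_solution_iff:
  "weak_distributive_solution m j \<longleftrightarrow> (\<forall>x y z.
     sandwich m (sandwich m x y) (sandwich m (sandwich j x y) z)
       = sandwich m x (sandwich m y z) \<and>
     sandwich j (sandwich m x y) (sandwich m (sandwich j x y) z)
       = sandwich m (sandwich j x (sandwich m y z)) (sandwich j y z) \<and>
     sandwich j (sandwich j x y) z
       = sandwich j (sandwich j x (sandwich m y z)) (sandwich j y z))"
  by (auto simp: weak_distributive_solution_def fun_eq_iff rW_def r12_def r23_def)

lemma band_rectangular:
  fixes f :: "'a \<Rightarrow> 'a \<Rightarrow> 'a"
  assumes assoc: "\<And>x y z. f (f x y) z = f x (f y z)" and idem: "\<And>x. f x x = x"
    and "f p x = x" "f x p = p" "f x e = x" "f e x = e"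
  shows "f p e = x"
proof -
  have "x = f (f x e) (f p x)" using assms(3,5) idem by simp
  also have "\<dots> = f x (f (f e p) (f (f e p) x))" using assoc idem by metis
  also have "\<dots> = f (f x e) (f (f p e) (f p x))" using assoc by metis
  also have "\<dots> = f (f x p) (f e x)" using assms(3,5) assoc by metis
  also have "\<dots> = f p e" using assms(4,6) by simp
  finally show ?thesis by simp
qed

locale skew_lattice_ops =
  fixes m j :: "'a \<Rightarrow> 'a \<Rightarrow> 'a"
  assumes skew_lattice: "skew_lattice m j"
begin

lemma meet_idem: "m x x = x"
  and join_idem: "j x x = x"
  and meet_assoc: "m (m x y) z = m x (m y z)"
  and join_assoc: "j (j x y) z = j x (j y z)"
  and absorb_meet_join: "m x (j x y) = x"
  and absorb_join_meet: "j x (m x y) = x"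
  and absorb_join_meet': "j (m x y) y = y"
  and absorb_meet_join': "m (j x y) y = y"
  using skew_lattice unfolding skew_lattice_def by blast+

lemma meet_regular: "m x (m y (m x (m z x))) = m x (m y (m z x))"
proof -
  define p e where "p = j (m x y) x" and "e = j x (m z x)"
  have "j x p = x"
    unfolding p_def by (metis join_assoc absorb_join_meet join_idem)
  then have xp: "m x p = p"
    by (metis absorb_meet_join')
  have "j e x = x"
    unfolding e_def by (metis join_assoc absorb_join_meet' join_idem)
  then have ex: "m e x = e"
    by (metis absorb_meet_join)
  have px: "m p x = x" and xe: "m x e = x"
    unfolding p_def e_def by (rule absorb_meet_join' absorb_meet_join)+
  have pe: "m p e = x"
    using meet_assoc meet_idem px xp xe ex by (rule band_rectangular)
  have "m x (m y (m z x)) = m (m (m x y) p) (m e (m z x))"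
    unfolding p_def e_def by (simp add: absorb_meet_join absorb_meet_join' meet_assoc)
  also have "\<dots> = m (m x y) (m (m p e) (m z x))"
    by (simp only: meet_assoc)
  also have "\<dots> = m x (m y (m x (m z x)))"
    by (simp only: pe meet_assoc)
  finally show ?thesis by simp
qed

lemma join_regular: "j x (j y (j x (j z x))) = j x (j y (j z x))"
proof -
  have "skew_lattice j m"
    using skew_lattice unfolding skew_lattice_def by blast
  then show ?thesis
    by (rule skew_lattice_ops.meet_regular[OF skew_lattice_ops.intro])
qed

lemma braid_first_component:
  "sandwich m (sandwich m x y) (sandwich m (sandwich j x y) z) = sandwich m x (sandwich m y z)"
proof -
  have left: "m x (m (sandwich j x y) w) = m x w" for w
    by (metis absorb_meet_join join_assoc meet_assoc)
  have right: "m (sandwich j x y) (m x w) = m x w" for w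
    by (metis absorb_meet_join' meet_assoc)
  have "sandwich m (sandwich m x y) (sandwich m (sandwich j x y) z)
      = m x (m y (m x (m (m z (m x y)) x)))"
    by (simp only: meet_assoc left right)
  also have "\<dots> = sandwich m x (sandwich m y z)"
    using meet_regular[of x y "m z y"] by (simp only: meet_regular meet_assoc)
  finally show ?thesis .
qed

lemma braid_third_component:
  "sandwich j (sandwich j x y) z = sandwich j (sandwich j x (sandwich m y z)) (sandwich j y z)"
proof -
  define w where "w = sandwich m y z"
  have left: "j w (j y v) = j y v" for v
    unfolding w_def by (metis absorb_join_meet' join_assoc)
  have right: "j y (j w v) = j y v" for v
    unfolding w_def by (metis absorb_join_meet join_assoc meet_assoc)
  have "sandwich j (sandwich j x y) z = j x (j y (j z (j y x)))"
    using join_regular[of x y "j z y"] by (simp only: join_assoc join_regular)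
  also have "\<dots> = j x (j w (j y (j z (j y (j w x)))))"
    by (simp only: left right)
  also have "\<dots> = sandwich j (sandwich j x w) (sandwich j y z)"
    by (metis join_regular join_assoc)
  finally show ?thesis
    unfolding w_def .
qed

end

theorem mainTheorem16:
  fixes m j :: "'a \<Rightarrow> 'a \<Rightarrow> 'a"
  assumes "skew_lattice m j"
  shows "weak_distributive_solution m j \<longleftrightarrow>
    (\<forall>x y z.
       j (j (m (m x y) x) (m (m (j (j x y) x) z) (j (j x y) x))) (m (m x y) x)
     = m (m (j (j x (m (m y z) y)) x) (j (j y z) y)) (j (j x (m (m y z) y)) x))"
proof -
  interpret skew_lattice_ops m j
    using assms by (rule skew_lattice_ops.intro)
  show ?thesis
    unfolding weak_distributive_solution_iff
    using braid_first_component braid_third_component by blast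
qed

end
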